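(* Let $r\geq 3$ be an integer and $c>0$ a real number. If $G$ is a graph of order $n$ with minimum degree $$\delta(G)>\left(\frac{r-1}{r}+c\right)n,$$ then $$k_{r+1}(G)>c\,\frac{r}{r+1}\left(\frac{n}{r}\right)^{r+1}\qquad\text{and}\qquad js^{(2,r+1,2)}(G)>c\left(\frac{n}{r}\right)^{r-2}.$$
   Context: All graphs are finite and simple. $\delta(G)$ denotes the minimum degree of $G$ and $k_s(G)$ is the number of $s$-cliques of $G$. For an integer $r\geq 2$, $js^{(2,r+1,2)}(G)$ is the maximum, over all edges $uv$ of $G$, of the number of $(r+1)$-cliques of $G$ containing both $u$ and $v$ (and $0$ if $G$ has no edges). *)

theory Defs
  imports Complex_Main
begin

definition simple_graph :: "'a set \<Rightarrow> 'a set set \<Rightarrow> bool" where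
  "simple_graph V E \<longleftrightarrow> finite V \<and> (\<forall>e\<in>E. e \<subseteq> V \<and> card e = 2)"

definition degree :: "'a set \<Rightarrow> 'a set set \<Rightarrow> 'a \<Rightarrow> nat" where
  "degree V E v = card {u \<in> V. {u, v} \<in> E}"

definition min_degree :: "'a set \<Rightarrow> 'a set set \<Rightarrow> nat" where
  "min_degree V E = (if V = {} then 0 else Min (degree V E ` V))"

definition is_clique :: "'a set \<Rightarrow> 'a set set \<Rightarrow> 'a set \<Rightarrow> bool" where
  "is_clique V E K \<longleftrightarrow> K \<subseteq> V \<and> (\<forall>u\<in>K. \<forall>v\<in>K. u \<noteq> v \<longrightarrow> {u, v} \<in> E)"

definition k_cliques :: "nat \<Rightarrow> 'a set \<Rightarrow> 'a set set \<Rightarrow> nat" where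
  "k_cliques s V E = card {K. is_clique V E K \<and> card K = s}"

definition edge_cliques :: "nat \<Rightarrow> 'a set \<Rightarrow> 'a set set \<Rightarrow> 'a set \<Rightarrow> nat" where
  "edge_cliques s V E e = card {K. is_clique V E K \<and> card K = s \<and> e \<subseteq> K}"

text \<open>js^(2,r+1,2)(G): max over edges of the number of (r+1)-cliques
  containing the edge; 0 if there are no edges.\<close>
definition js_edge :: "nat \<Rightarrow> 'a set \<Rightarrow> 'a set set \<Rightarrow> nat" where
  "js_edge r V E = (if E = {} then 0 else Max (edge_cliques (r + 1) V E ` E))"

end

theory Submission
  imports Defs "HOL-Combinatorics.Multiset_Permutations"
begin

text \<open>Every vertex misses at most \<open>n - \<delta>\<close> vertices, so a clique with \<open>j\<close> vertices has at
  least \<open>n - j (n - \<delta>)\<close> common neighbours. Growing a clique \<open>K\<close> one vertex at a time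
  therefore yields at least \<open>\<Prod>i<m. n - (|K| + i) (n - \<delta>)\<close> ordered extensions by \<open>m\<close>
  vertices, and every \<open>(|K| + m)\<close>-clique containing \<open>K\<close> arises from exactly \<open>m!\<close> of them.
  If \<open>\<delta> > ((r - 1) / r + c) n\<close> and \<open>|K| + m = r + 1\<close>, then \<open>n - \<delta> < n / r\<close>, so all factors
  but the last are at least \<open>(r - |K| - i) n / r\<close>, while the last one exceeds \<open>r c n\<close>. Taking \<open>K\<close>
  empty gives the bound on \<open>k\<^sub>r\<^sub>+\<^sub>1\<close>, taking \<open>K\<close> an edge the bound on \<open>js\<close>.\<close>

definition common_nbhd :: "'a set \<Rightarrow> 'a set set \<Rightarrow> 'a set \<Rightarrow> 'a set" where
  "common_nbhd V E K = {v \<in> V. \<forall>u\<in>K. {u, v} \<in> E}"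

definition clique_extensions :: "'a set \<Rightarrow> 'a set set \<Rightarrow> 'a set \<Rightarrow> nat \<Rightarrow> 'a list set" where
  "clique_extensions V E K m =
     {xs. length xs = m \<and> distinct xs \<and> set xs \<inter> K = {} \<and> is_clique V E (set xs \<union> K)}"

lemma min_degree_le_degree:
  assumes "finite V" and "v \<in> V"
  shows "min_degree V E \<le> degree V E v"
  using assms by (auto simp: min_degree_def)

lemma degree_le_card:
  assumes "finite V"
  shows "degree V E v \<le> card V"
  unfolding degree_def using assms by (intro card_mono) auto

lemma card_non_neighbours:
  assumes "finite V"
  shows "card {v \<in> V. {u, v} \<notin> E} = card V - degree V E u"
proof -
  have "{v \<in> V. {u, v} \<notin> E} = V - {w \<in> V. {w, u} \<in> E}"
    by (auto simp: insert_commute)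
  then show ?thesis
    unfolding degree_def using assms by (simp add: card_Diff_subset)
qed

lemma card_le_card_common_nbhd:
  assumes "finite V" and "K \<subseteq> V"
  shows "card V \<le> card (common_nbhd V E K) + card K * (card V - min_degree V E)"
proof -
  have "finite K" using assms finite_subset by blast
  have "V - common_nbhd V E K = (\<Union>u\<in>K. {v \<in> V. {u, v} \<notin> E})"
    unfolding common_nbhd_def by blast
  then have "card (V - common_nbhd V E K) \<le> (\<Sum>u\<in>K. card {v \<in> V. {u, v} \<notin> E})"
    using card_UN_le[OF \<open>finite K\<close>] by simp
  also have "\<dots> \<le> (\<Sum>u\<in>K. card V - min_degree V E)"
  proof (rule sum_mono)
    fix u assume "u \<in> K"
    then show "card {v \<in> V. {u, v} \<notin> E} \<le> card V - min_degree V E"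
      using assms by (simp add: card_non_neighbours diff_le_mono2 min_degree_le_degree subsetD)
  qed
  finally have "card (V - common_nbhd V E K) \<le> card K * (card V - min_degree V E)"
    by simp
  moreover have "card V \<le> card (common_nbhd V E K) + card (V - common_nbhd V E K)"
    using card_Un_le[of "common_nbhd V E K" "V - common_nbhd V E K"]
    by (simp add: Un_absorb1 common_nbhd_def)
  ultimately show ?thesis by linarith
qed

lemma finite_clique_extensions:
  assumes "finite V"
  shows "finite (clique_extensions V E K m)"
proof -
  have "clique_extensions V E K m \<subseteq> {xs. set xs \<subseteq> V \<and> length xs = m}"
    unfolding clique_extensions_def is_clique_def by auto
  then show ?thesis using finite_lists_length_eq[OF assms] finite_subset by blast
qed

lemma clique_extensionsD:
  assumes "finite V" and "xs \<in> clique_extensions V E K m"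
  shows "set xs \<union> K \<subseteq> V" and "card (set xs \<union> K) = card K + m"
proof -
  show "set xs \<union> K \<subseteq> V"
    using assms(2) unfolding clique_extensions_def is_clique_def by blast
  then have "finite K" using assms(1) finite_subset by blast
  then show "card (set xs \<union> K) = card K + m"
    using assms(2) unfolding clique_extensions_def
    by (simp add: card_Un_disjoint distinct_card inf_commute)
qed

lemma Cons_mem_clique_extensions_iff:
  assumes "simple_graph V E"
  shows "w # xs \<in> clique_extensions V E K (Suc m) \<longleftrightarrow>
    xs \<in> clique_extensions V E K m \<and> w \<in> common_nbhd V E (set xs \<union> K)"
proof -
  have "{w} \<notin> E"
    using assms unfolding simple_graph_def by fastforce
  then show ?thesis
    unfolding clique_extensions_def common_nbhd_def is_clique_def
    by (auto simp: insert_commute dest: bspec[where x = w])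
qed

lemma clique_extensions_Suc:
  assumes "simple_graph V E"
  shows "clique_extensions V E K (Suc m) =
    (\<lambda>(xs, w). w # xs) ` (SIGMA xs:clique_extensions V E K m. common_nbhd V E (set xs \<union> K))"
proof (intro set_eqI iffI)
  fix ys assume ys: "ys \<in> clique_extensions V E K (Suc m)"
  then obtain w xs where "ys = w # xs"
    unfolding clique_extensions_def by (cases ys) auto
  with ys show "ys \<in> (\<lambda>(xs, w). w # xs) `
      (SIGMA xs:clique_extensions V E K m. common_nbhd V E (set xs \<union> K))"
    using Cons_mem_clique_extensions_iff[OF assms] by force
qed (use Cons_mem_clique_extensions_iff[OF assms] in force)

lemma card_clique_extensions_Suc:
  assumes "simple_graph V E"
  shows "card (clique_extensions V E K (Suc m)) =
    (\<Sum>xs\<in>clique_extensions V E K m. card (common_nbhd V E (set xs \<union> K)))"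
proof -
  have "finite V" using assms by (simp add: simple_graph_def)
  have "inj_on (\<lambda>(xs, w). w # xs) A" for A :: "('a list \<times> 'a) set"
    by (auto simp: inj_on_def)
  then show ?thesis
    unfolding clique_extensions_Suc[OF assms]
    using finite_clique_extensions[OF \<open>finite V\<close>] \<open>finite V\<close>
    by (simp add: card_image common_nbhd_def)
qed

lemma prod_le_card_clique_extensions:
  assumes sg: "simple_graph V E" and K: "is_clique V E K"
  shows "(\<Prod>i<m. card V - (card K + i) * (card V - min_degree V E))
    \<le> card (clique_extensions V E K m)"
proof (induction m)
  case 0
  have "clique_extensions V E K 0 = {[]}"
    using K unfolding clique_extensions_def by auto
  then show ?case by simp
next
  case (Suc m)
  define f where "f = card V - (card K + m) * (card V - min_degree V E)"
  have "finite V" using sg by (simp add: simple_graph_def)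
  have "f \<le> card (common_nbhd V E (set xs \<union> K))"
    if "xs \<in> clique_extensions V E K m" for xs
    using card_le_card_common_nbhd[OF \<open>finite V\<close>, of "set xs \<union> K" E]
      clique_extensionsD[OF \<open>finite V\<close> that] unfolding f_def by simp
  then have step: "card (clique_extensions V E K m) * f \<le> card (clique_extensions V E K (Suc m))"
    unfolding card_clique_extensions_Suc[OF sg]
    using sum_mono[of "clique_extensions V E K m" "\<lambda>_. f"] by (simp add: mult.commute)
  have "(\<Prod>i<Suc m. card V - (card K + i) * (card V - min_degree V E))
      = (\<Prod>i<m. card V - (card K + i) * (card V - min_degree V E)) * f"
    by (simp add: f_def)
  also have "\<dots> \<le> card (clique_extensions V E K m) * f"
    using Suc.IH by (rule mult_right_mono) simp
  also have "\<dots> \<le> card (clique_extensions V E K (Suc m))"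
    by (rule step)
  finally show ?case .
qed

lemma card_clique_extensions_le:
  assumes "finite V"
  shows "card (clique_extensions V E K m)
    \<le> fact m * card {L. is_clique V E L \<and> card L = card K + m \<and> K \<subseteq> L}"
proof -
  define C where "C = {L. is_clique V E L \<and> card L = card K + m \<and> K \<subseteq> L}"
  have "finite C"
    using assms unfolding C_def is_clique_def by (auto intro: finite_subset[of _ "Pow V"])
  have cover: "clique_extensions V E K m \<subseteq> (\<Union>L\<in>C. permutations_of_set (L - K))"
  proof
    fix xs assume xs: "xs \<in> clique_extensions V E K m"
    then have "set xs \<union> K \<in> C"
      using clique_extensionsD[OF assms xs] unfolding clique_extensions_def C_def by auto
    moreover have "xs \<in> permutations_of_set (set xs \<union> K - K)"
      using xs unfolding clique_extensions_def by (auto simp: permutations_of_set_def)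
    ultimately show "xs \<in> (\<Union>L\<in>C. permutations_of_set (L - K))" by blast
  qed
  have card_perms: "card (permutations_of_set (L - K)) = fact m" if "L \<in> C" for L
  proof -
    have "finite L" using that assms unfolding C_def is_clique_def by (auto intro: finite_subset)
    moreover have "K \<subseteq> L" "card L = card K + m" using that unfolding C_def by auto
    ultimately have "card (L - K) = m"
      by (simp add: card_Diff_subset finite_subset)
    then show ?thesis using \<open>finite L\<close> by simp
  qed
  have "card (clique_extensions V E K m) \<le> card (\<Union>L\<in>C. permutations_of_set (L - K))"
    using cover \<open>finite C\<close> by (intro card_mono) auto
  also have "\<dots> \<le> (\<Sum>L\<in>C. card (permutations_of_set (L - K)))"
    using \<open>finite C\<close> by (rule card_UN_le)
  also have "\<dots> = fact m * card C"
    using card_perms by simp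
  finally show ?thesis unfolding C_def .
qed

lemma pow_mult_fact_le_prod:
  fixes q :: real
  assumes "0 \<le> q" and "\<And>i. i < m \<Longrightarrow> real (m - i) * q \<le> f i"
  shows "q ^ m * fact m \<le> (\<Prod>i<m. f i)"
proof -
  have "q ^ m * fact m = (\<Prod>i<m. real (m - i) * q)"
    by (simp add: prod.distrib fact_prod_rev atLeast0LessThan mult.commute)
  also have "\<dots> \<le> (\<Prod>i<m. f i)"
    using assms by (intro prod_mono) auto
  finally show ?thesis .
qed

lemma real_diff_le_of_nat_diff: "real a - real b \<le> real (a - b)"
  by linarith

lemma pow_fact_mult_lt_prod_diff:
  fixes c :: real
  assumes "a \<le> r" and "0 < r" and "0 < c" and "0 < N"
    and gap: "real r * real D < real N - real r * c * real N"
  shows "(real N / real r) ^ (r - a) * fact (r - a) * (real r * c * real N)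
    < real (\<Prod>i<Suc (r - a). N - (a + i) * D)"
proof -
  define m where "m = r - a"
  define q where "q = real N / real r"
  define f where "f i = N - (a + i) * D" for i
  have "0 < real r * c * real N" using assms by simp
  then have "real D \<le> q" using gap \<open>0 < r\<close> unfolding q_def by (simp add: field_simps)
  have "real (a + m) * q = real N" using assms(1,2) unfolding m_def q_def by simp
  have "q ^ m * fact m \<le> (\<Prod>i<m. real (f i))"
  proof (rule pow_mult_fact_le_prod)
    show "0 \<le> q" unfolding q_def by simp
    fix i assume "i < m"
    have "real (m - i) * q = real N - real (a + i) * q"
      using \<open>real (a + m) * q = real N\<close> \<open>i < m\<close> by (simp add: algebra_simps)
    also have "\<dots> \<le> real N - real (a + i) * real D"
      using \<open>real D \<le> q\<close> by (simp add: mult_left_mono)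
    also have "\<dots> \<le> real (f i)"
      unfolding f_def using real_diff_le_of_nat_diff[of N "(a + i) * D"] by simp
    finally show "real (m - i) * q \<le> real (f i)" .
  qed
  have "real r * c * real N < real (f m)"
    using gap real_diff_le_of_nat_diff[of N "r * D"] \<open>a \<le> r\<close> unfolding f_def m_def by simp
  moreover have "0 < q ^ m * fact m" using assms(2,4) unfolding q_def by simp
  ultimately have "q ^ m * fact m * (real r * c * real N) < q ^ m * fact m * real (f m)"
    by (intro mult_strict_left_mono)
  also have "\<dots> \<le> (\<Prod>i<m. real (f i)) * real (f m)"
    using \<open>q ^ m * fact m \<le> (\<Prod>i<m. real (f i))\<close> by (rule mult_right_mono) simp
  also have "\<dots> = real (\<Prod>i<Suc m. f i)"
    by simp
  finally show ?thesis unfolding m_def q_def f_def .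
qed

lemma non_degree_bound:
  fixes c :: real
  assumes "finite V" and "0 < r"
    and "real (min_degree V E) > ((real r - 1) / real r + c) * real (card V)"
  shows "real r * real (card V - min_degree V E) < real (card V) - real r * c * real (card V)"
proof -
  have "V \<noteq> {}" using assms(3) by (auto simp: min_degree_def)
  then obtain v where "v \<in> V" by blast
  then have "min_degree V E \<le> card V"
    using \<open>finite V\<close> degree_le_card min_degree_le_degree le_trans by metis
  then have "real r * real (card V - min_degree V E)
      = real r * real (card V) - real r * real (min_degree V E)"
    by (simp add: right_diff_distrib)
  also have "\<dots> < real (card V) - real r * c * real (card V)"
    using assms(2,3) by (simp add: field_simps)
  finally show ?thesis .
qed

lemma card_cliques_containing_clique_gt:
  fixes c :: real
  assumes sg: "simple_graph V E" and K: "is_clique V E K"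
    and "card K \<le> r" and "0 < r" and "0 < c"
    and md: "real (min_degree V E) > ((real r - 1) / real r + c) * real (card V)"
  shows "(real (card V) / real r) ^ (r - card K) * (real r * c * real (card V))
    < real (r - card K + 1) * real (card {L. is_clique V E L \<and> card L = r + 1 \<and> K \<subseteq> L})"
proof -
  define m where "m = r - card K"
  define N where "N = card {L. is_clique V E L \<and> card L = r + 1 \<and> K \<subseteq> L}"
  have "finite V" using sg by (simp add: simple_graph_def)
  have "V \<noteq> {}" using md by (auto simp: min_degree_def)
  then have "0 < card V" using \<open>finite V\<close> by (simp add: card_gt_0_iff)
  have "card K + Suc m = r + 1" using \<open>card K \<le> r\<close> unfolding m_def by simp
  have "(real (card V) / real r) ^ m * fact m * (real r * c * real (card V))
      < real (\<Prod>i<Suc m. card V - (card K + i) * (card V - min_degree V E))"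
    using pow_fact_mult_lt_prod_diff[OF \<open>card K \<le> r\<close> \<open>0 < r\<close> \<open>0 < c\<close> \<open>0 < card V\<close>]
      non_degree_bound[OF \<open>finite V\<close> \<open>0 < r\<close> md]
    unfolding m_def by blast
  also have "\<dots> \<le> real (card (clique_extensions V E K (Suc m)))"
    unfolding of_nat_le_iff by (rule prod_le_card_clique_extensions[OF sg K])
  also have "\<dots> \<le> real (fact (Suc m) * N)"
    using card_clique_extensions_le[OF \<open>finite V\<close>, of E K "Suc m"]
    unfolding of_nat_le_iff N_def \<open>card K + Suc m = r + 1\<close> .
  also have "\<dots> = fact m * (real (m + 1) * real N)"
    by (simp add: algebra_simps)
  finally have "fact m * ((real (card V) / real r) ^ m * (real r * c * real (card V)))
      < fact m * (real (m + 1) * real N)"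
    by (simp add: mult_ac)
  then show ?thesis
    unfolding m_def N_def by simp
qed

lemma obtain_edge_if_min_degree_pos:
  assumes "finite V" and "0 < min_degree V E"
  obtains u v where "u \<in> V" and "v \<in> V" and "{u, v} \<in> E"
proof -
  have "V \<noteq> {}" using assms(2) by (auto simp: min_degree_def)
  then obtain v where "v \<in> V" by blast
  with assms have "0 < degree V E v"
    using min_degree_le_degree order_less_le_trans by metis
  then obtain u where "u \<in> V" "{u, v} \<in> E"
    unfolding degree_def card_gt_0_iff by blast
  with \<open>v \<in> V\<close> show ?thesis using that by blast
qed

lemma edge_cliques_le_js_edge:
  assumes "simple_graph V E" and "e \<in> E"
  shows "edge_cliques (r + 1) V E e \<le> js_edge r V E"
proof -
  have "finite E"
    using assms(1) unfolding simple_graph_def by (meson Pow_iff finite_Pow_iff finite_subset subsetI)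
  then show ?thesis
    using assms(2) unfolding js_edge_def by auto
qed

lemma k_cliques_gt:
  fixes c :: real
  assumes "simple_graph V E" and "0 < r" and "0 < c"
    and "real (min_degree V E) > ((real r - 1) / real r + c) * real (card V)"
  shows "c * (real r / (real r + 1)) * (real (card V) / real r) ^ (r + 1) < real (k_cliques (r + 1) V E)"
proof -
  define n where "n = real (card V)"
  define q where "q = n / real r"
  have "0 \<le> q" and "real r * q = n" using \<open>0 < r\<close> unfolding q_def n_def by auto
  have "q ^ r * (real r * c * n) < real (r + 1) * real (k_cliques (r + 1) V E)"
    using card_cliques_containing_clique_gt[of V E "{}" r c] assms
    unfolding k_cliques_def n_def q_def by (simp add: is_clique_def)
  moreover have "real (r + 1) * (c * (real r / (real r + 1)) * q ^ (r + 1)) = q ^ r * (c * n)"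
    unfolding \<open>real r * q = n\<close>[symmetric] by (simp add: field_simps)
  moreover have "q ^ r * (c * n) \<le> q ^ r * (real r * c * n)"
  proof -
    have "c * n \<le> real r * c * n"
      using mult_right_mono[of 1 "real r" "c * n"] \<open>0 < r\<close> \<open>0 < c\<close> unfolding n_def
      by (simp add: mult.assoc)
    with \<open>0 \<le> q\<close> show ?thesis by (simp add: mult_left_mono)
  qed
  ultimately have "real (r + 1) * (c * (real r / (real r + 1)) * q ^ (r + 1))
      < real (r + 1) * real (k_cliques (r + 1) V E)"
    by linarith
  then show ?thesis
    unfolding q_def n_def by (rule mult_left_less_imp_less) simp
qed

lemma js_edge_gt:
  fixes c :: real
  assumes sg: "simple_graph V E" and "2 \<le> r" and "0 < c"
    and md: "real (min_degree V E) > ((real r - 1) / real r + c) * real (card V)"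
  shows "c * (real (card V) / real r) ^ (r - 2) < real (js_edge r V E)"
proof -
  define n where "n = real (card V)"
  define q where "q = n / real r"
  have "finite V" using sg by (simp add: simple_graph_def)
  have "0 \<le> ((real r - 1) / real r + c) * n"
    using assms(2,3) unfolding n_def by simp
  then have "0 < min_degree V E" using md unfolding n_def by linarith
  then obtain u v where "u \<in> V" "v \<in> V" and uv: "{u, v} \<in> E"
    using obtain_edge_if_min_degree_pos[OF \<open>finite V\<close>] by blast
  then have "u \<noteq> v" using sg by (auto simp: simple_graph_def)
  have "1 \<le> n" using \<open>u \<in> V\<close> \<open>finite V\<close> unfolding n_def by (auto simp: Suc_le_eq card_gt_0_iff)
  have "is_clique V E {u, v}"
    using \<open>u \<in> V\<close> \<open>v \<in> V\<close> uv by (auto simp: is_clique_def insert_commute)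
  moreover have "card {u, v} = 2" and "r - 2 + 1 = r - 1" using \<open>u \<noteq> v\<close> assms(2) by auto
  ultimately have "q ^ (r - 2) * (real r * c * n) < real (r - 1) * real (edge_cliques (r + 1) V E {u, v})"
    using card_cliques_containing_clique_gt[OF sg, of "{u, v}" r c] assms(2-4)
    unfolding edge_cliques_def n_def q_def by simp
  moreover have "real (r - 1) * (c * q ^ (r - 2)) \<le> q ^ (r - 2) * (real r * c * n)"
  proof -
    have "real (r - 1) \<le> real r * n"
      using mult_left_mono[OF \<open>1 \<le> n\<close>, of "real r"] by linarith
    then have "real (r - 1) * (c * q ^ (r - 2)) \<le> real r * n * (c * q ^ (r - 2))"
      using \<open>0 < c\<close> \<open>1 \<le> n\<close> unfolding q_def by (intro mult_right_mono) auto
    then show ?thesis by (simp only: mult_ac)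
  qed
  ultimately have "real (r - 1) * (c * q ^ (r - 2))
      < real (r - 1) * real (edge_cliques (r + 1) V E {u, v})"
    by linarith
  then have "c * q ^ (r - 2) < real (edge_cliques (r + 1) V E {u, v})"
    by (rule mult_left_less_imp_less) simp
  also have "\<dots> \<le> real (js_edge r V E)"
    using edge_cliques_le_js_edge[OF sg uv] by simp
  finally show ?thesis unfolding q_def n_def .
qed

theorem corollary2:
  fixes V :: "'a set" and E :: "'a set set" and r :: nat and c :: real
  assumes "simple_graph V E"
    and "r \<ge> 3"
    and "c > 0"
    and "real (min_degree V E) > ((real r - 1) / real r + c) * real (card V)"
  shows "real (k_cliques (r + 1) V E) > c * (real r / (real r + 1)) * (real (card V) / real r) ^ (r + 1)
    \<and> real (js_edge r V E) > c * (real (card V) / real r) ^ (r - 2)"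
  using k_cliques_gt[OF assms(1) _ assms(3,4)] js_edge_gt[OF assms(1) _ assms(3,4)] assms(2)
  by simp

end
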